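(* Let $x \in \mathcal{O}_s \cup \mathcal{O}_t$ with $x \neq 1$, and let $\lambda = \left(x^{q-1} + x^{-(q-1)}\right)^{q-1}$. Then $$x^{q+1} + \sqrt{(\lambda^{\sqrt{2q}}+1)\lambda}\; x + \lambda^{\sqrt{2q}/2} = 0,$$ where $\sqrt{y}$ denotes the unique square root of $y$ in $E$.
   Context: Let $q = 2^m$ with $m \ge 3$ odd, so that $\sqrt{2q} = 2^{(m+1)/2}$ is an integer and $\sqrt{2q}/2 = 2^{(m-1)/2}$. Let $E = \mathbb{F}_{q^4}$. Put $s = q - \sqrt{2q} + 1$ and $t = q + \sqrt{2q} + 1$. Define $\mathcal{O}_s = \{x \in E \mid x^s = 1\}$ and $\mathcal{O}_t = \{x \in E \mid x^t = 1\}$. *)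

theory Defs
  imports Main
begin

text \<open>The square root of an element of a field: the unique y with y^2 = z
  (in a finite field of characteristic 2 it always exists and is unique).\<close>
definition fsqrt :: "'a::field \<Rightarrow> 'a" where
  "fsqrt z = (THE y. y ^ 2 = z)"

definition roots_of_unity :: "nat \<Rightarrow> 'a::field set" where
  "roots_of_unity n = {x. x ^ n = 1}"

end

theory Submission
  imports Defs "HOL-Computational_Algebra.Primes" "HOL-Number_Theory.Residues"
begin

text \<open>A field with \<open>2^(4m)\<close> elements has characteristic 2, so \<open>2^k\<close>-th powers are additive
  and squaring is injective. Put \<open>X = x^q\<close>. Since \<open>s t = q^2 + 1\<close>, every \<open>x \<in> O_s \<union> O_t\<close>
  satisfies \<open>x^(q^2+1) = 1\<close>, i.e. \<open>X^q = x\<^sup>-\<^sup>1\<close>; with this Frobenius shows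
  \<open>\<lambda> = \<mu>^2\<close> for \<open>\<mu> = (1 + x X)/(x + X)\<close>, so the square root in the claim is \<open>(\<mu>^r + 1) \<mu>\<close> and
  \<open>\<lambda>^(r/2) = \<mu>^r\<close>. As \<open>x^r\<close> equals \<open>x X\<close> on \<open>O_s\<close> and \<open>(x X)\<^sup>-\<^sup>1\<close> on \<open>O_t\<close>, in both cases
  \<open>\<mu>^r = x (X^2 + 1)/(X (x^2 + 1))\<close>, and the claim becomes a rational identity in \<open>x, X\<close>
  whose numerator is divisible by 2.\<close>

lemma CHAR_eq_2_if_card_eq_power_2:
  assumes "card (UNIV :: 'a::{field,finite} set) = 2 ^ n"
  shows "CHAR('a) = 2"
proof -
  have "prime CHAR('a)"
    by (intro prime_CHAR_semidom finite_imp_CHAR_pos) simp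
  moreover have "CHAR('a) dvd 2 ^ n"
    using CHAR_dvd_CARD[where 'a = 'a] assms by simp
  ultimately have "CHAR('a) dvd 2"
    using prime_dvd_power by blast
  with \<open>prime CHAR('a)\<close> show ?thesis
    using primes_dvd_imp_eq two_is_prime_nat by blast
qed

lemma add_power_two_power_CHAR_2:
  fixes a b :: "'a::comm_ring_1"
  assumes "CHAR('a) = 2"
  shows "(a + b) ^ (2 ^ k) = a ^ (2 ^ k) + b ^ (2 ^ k)"
  by (rule freshmans_dream') (use assms in simp_all)

lemma square_eq_square_iff_CHAR_2:
  fixes a b :: "'a::field"
  assumes "CHAR('a) = 2"
  shows "a ^ 2 = b ^ 2 \<longleftrightarrow> a = b"
proof
  assume "a ^ 2 = b ^ 2"
  then have "(a - b) ^ 2 = 0"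
    using add_power_two_power_CHAR_2[OF assms, of a "-b" 1] uminus_CHAR_2[OF assms]
    by (simp add: minus_CHAR_2[OF assms])
  then show "a = b" by simp
qed simp

lemma fsqrt_square_CHAR_2:
  fixes a :: "'a::field"
  assumes "CHAR('a) = 2"
  shows "fsqrt (a ^ 2) = a"
  unfolding fsqrt_def using square_eq_square_iff_CHAR_2[OF assms] by auto

lemma square_add_one_ne_zero_CHAR_2:
  fixes x :: "'a::field"
  assumes "CHAR('a) = 2" and "x \<noteq> 1"
  shows "x ^ 2 + 1 \<noteq> 0"
proof -
  have "x ^ 2 + 1 = (x - 1) ^ 2"
    using add_power_two_power_CHAR_2[OF assms(1), of x 1 1]
    by (simp add: minus_CHAR_2[OF assms(1)])
  then show ?thesis using assms(2) by simp
qed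

lemma power_power_eq_inverse:
  fixes x :: "'a::field"
  assumes "x ^ (q * q + 1) = 1"
  shows "(x ^ q) ^ q = inverse x"
proof -
  have "x \<noteq> 0" using assms by (auto simp: power_0_left)
  with assms show ?thesis
    by (simp add: power_mult[symmetric] field_simps)
qed

lemma add_power_ne_zero_CHAR_2:
  fixes x :: "'a::field"
  assumes "CHAR('a) = 2" and "x ^ (q * q + 1) = 1" and "x \<noteq> 1"
  shows "x + x ^ q \<noteq> 0"
proof
  assume "x + x ^ q = 0"
  then have "x ^ q = x"
    using uminus_CHAR_2[OF assms(1), of "x ^ q"] by (metis add_eq_0_iff2)
  then have "x = inverse x"
    using power_power_eq_inverse[OF assms(2)] by simp
  moreover have "x \<noteq> 0"
    using assms(2) by (auto simp: power_0_left)
  ultimately have "x ^ 2 = 1 ^ 2"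
    by (metis power2_eq_square power_one right_inverse)
  then show False
    using assms(3) square_eq_square_iff_CHAR_2[OF assms(1)] by blast
qed

lemma power_pred_add_inverse_eq_square_CHAR_2:
  fixes x :: "'a::field"
  assumes char: "CHAR('a) = 2" and q: "q = 2 ^ k"
    and x: "x ^ (q * q + 1) = 1" "x \<noteq> 1"
  shows "(x ^ (q - 1) + inverse (x ^ (q - 1))) ^ (q - 1) = ((1 + x * x ^ q) / (x + x ^ q)) ^ 2"
proof -
  define X where "X = x ^ q"
  have "x \<noteq> 0" using x(1) by (auto simp: power_0_left)
  then have "X \<noteq> 0" by (simp add: X_def)
  have "x + X \<noteq> 0" unfolding X_def by (rule add_power_ne_zero_CHAR_2[OF char x])
  have sq_add: "(a + b) ^ 2 = a ^ 2 + b ^ 2" for a b :: 'a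
    using add_power_two_power_CHAR_2[OF char, of a b 1] by simp
  define v where "v = X / x + x / X"
  have "x ^ (q - 1) = X / x"
    using \<open>x \<noteq> 0\<close> by (simp add: X_def q power_diff)
  then have lhs: "(x ^ (q - 1) + inverse (x ^ (q - 1))) ^ (q - 1) = v ^ (q - 1)"
    by (simp add: v_def)
  have v: "v = (x + X) ^ 2 / (x * X)"
    unfolding v_def sq_add using \<open>x \<noteq> 0\<close> \<open>X \<noteq> 0\<close> by (simp add: field_simps power2_eq_square)
  have "v ^ (q - 1) * v = v ^ q"
    by (simp add: q flip: power_Suc2)
  also have "\<dots> = (X / x) ^ q + (x / X) ^ q"
    unfolding v_def q by (rule add_power_two_power_CHAR_2[OF char])
  also have "\<dots> = inverse x / X + X / inverse x"
    using power_power_eq_inverse[OF x(1)] by (simp add: power_divide flip: X_def)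
  also have "\<dots> = (1 + x * X) ^ 2 / (x * X)"
    unfolding sq_add using \<open>x \<noteq> 0\<close> \<open>X \<noteq> 0\<close> by (simp add: field_simps power2_eq_square)
  also have "\<dots> = ((1 + x * X) / (x + X)) ^ 2 * v"
    unfolding v using \<open>x + X \<noteq> 0\<close> \<open>x \<noteq> 0\<close> \<open>X \<noteq> 0\<close> by (simp add: power_divide)
  finally have "v ^ (q - 1) * v = ((1 + x * X) / (x + X)) ^ 2 * v" .
  moreover have "v \<noteq> 0"
    unfolding v using \<open>x + X \<noteq> 0\<close> \<open>x \<noteq> 0\<close> \<open>X \<noteq> 0\<close> by simp
  ultimately show ?thesis
    unfolding lhs X_def by simp
qed

lemma frac_power_two_power_eq_CHAR_2:
  fixes x :: "'a::field" and q :: nat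
  defines "X \<equiv> x ^ q"
  assumes char: "CHAR('a) = 2" and r: "r = 2 ^ j"
    and x: "x ^ (q * q + 1) = 1" "x \<noteq> 1"
    and xr: "x ^ r = x ^ (q + 1) \<or> x ^ r * x ^ (q + 1) = 1"
  shows "((1 + x * X) / (x + X)) ^ r = x * (X ^ 2 + 1) / (X * (x ^ 2 + 1))"
proof -
  have "x \<noteq> 0" using x(1) by (auto simp: power_0_left)
  then have "X \<noteq> 0" by (simp add: X_def)
  have Xq: "X ^ q = inverse x"
    unfolding X_def by (rule power_power_eq_inverse[OF x(1)])
  have "x ^ 2 + 1 \<noteq> 0" by (rule square_add_one_ne_zero_CHAR_2[OF char x(2)])
  have frac_r: "((1 + x * X) / (x + X)) ^ r = (1 + x ^ r * X ^ r) / (x ^ r + X ^ r)"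
    unfolding power_divide r by (simp add: add_power_two_power_CHAR_2[OF char] power_mult_distrib)
  have Xr: "X ^ r = (x ^ r) ^ q"
    unfolding X_def by (simp flip: power_mult add: mult.commute)
  from xr show ?thesis
  proof
    assume "x ^ r = x ^ (q + 1)"
    then have xr': "x ^ r = x * X" by (simp add: X_def)
    have Xr': "X ^ r = X / x"
      unfolding Xr xr' by (simp add: power_mult_distrib Xq field_simps flip: X_def)
    show ?thesis
      unfolding frac_r xr' Xr' using \<open>x \<noteq> 0\<close> \<open>X \<noteq> 0\<close> \<open>x ^ 2 + 1 \<noteq> 0\<close>
      by (simp add: field_simps power2_eq_square)
  next
    assume "x ^ r * x ^ (q + 1) = 1"
    then have xr': "x ^ r = inverse (x * X)"
      unfolding X_def using \<open>x \<noteq> 0\<close> by (simp add: field_simps)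
    have Xr': "X ^ r = x / X"
      unfolding Xr xr' using \<open>x \<noteq> 0\<close>
      by (simp add: power_mult_distrib Xq power_inverse field_simps flip: X_def)
    show ?thesis
      unfolding frac_r xr' Xr' using \<open>x \<noteq> 0\<close> \<open>X \<noteq> 0\<close> \<open>x ^ 2 + 1 \<noteq> 0\<close>
      by (simp add: divide_simps) (simp add: algebra_simps power2_eq_square)
  qed
qed

lemma quadratic_relation_CHAR_2:
  fixes x X :: "'a::field"
  defines "\<mu> \<equiv> (1 + x * X) / (x + X)" and "M \<equiv> x * (X ^ 2 + 1) / (X * (x ^ 2 + 1))"
  assumes char: "CHAR('a) = 2" and "x \<noteq> 1" "X \<noteq> 0" "x + X \<noteq> 0"
  shows "x * X + (M + 1) * \<mu> * x + M = 0"
proof -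
  have "x ^ 2 + 1 \<noteq> 0" by (rule square_add_one_ne_zero_CHAR_2[OF char \<open>x \<noteq> 1\<close>])
  have "x * X + (M + 1) * \<mu> * x + M
      = (x * X * (x + X) * (X * (x ^ 2 + 1)) + (x * (X ^ 2 + 1) + X * (x ^ 2 + 1)) * (1 + x * X) * x
          + x * (X ^ 2 + 1) * (x + X)) / ((x + X) * (X * (x ^ 2 + 1)))"
    unfolding \<mu>_def M_def using assms(5,6) \<open>x ^ 2 + 1 \<noteq> 0\<close> by (simp add: divide_simps)
  also have "\<dots> = 2 * (x*X + x*X^3 + x^2 + 2*x^2*X^2 + x^3*X + x^3*X^3 + x^4*X^2)
      / ((x + X) * (X * (x ^ 2 + 1)))"
    by (simp add: algebra_simps power2_eq_square power3_eq_cube power4_eq_xxxx)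
  also have "(2::'a) = 0"
    using of_nat_CHAR[where 'a = 'a] char by simp
  finally show ?thesis by simp
qed

lemma square_add_one_eq_mult:
  fixes q r :: nat
  assumes "r * r = 2 * q" and "r \<le> q"
  shows "(q - r + 1) * (q + r + 1) = q * q + 1"
proof -
  obtain d where d: "q = r + d" using assms(2) le_Suc_ex by blast
  with assms(1) have "r * r = 2 * r + 2 * d" by simp
  then show ?thesis by (simp add: d algebra_simps)
qed

lemma two_power_half_square:
  assumes "odd m"
  shows "(2::nat) ^ ((m + 1) div 2) * 2 ^ ((m + 1) div 2) = 2 * 2 ^ m"
proof -
  have "(m + 1) div 2 + (m + 1) div 2 = Suc m"
    using assms by presburger
  then show ?thesis by (metis power_Suc power_add)
qed

lemma roots_of_unity_conjugate_unionD:
  fixes x :: "'a::field" and q r :: nat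
  assumes "r * r = 2 * q" and "r \<le> q"
    and "x \<in> roots_of_unity (q - r + 1) \<union> roots_of_unity (q + r + 1)"
  shows "x ^ (q * q + 1) = 1" and "x ^ r = x ^ (q + 1) \<or> x ^ r * x ^ (q + 1) = 1"
proof -
  have x: "x ^ (q - r + 1) = 1 \<or> x ^ (q + r + 1) = 1"
    using assms(3) by (auto simp: roots_of_unity_def)
  then show "x ^ (q * q + 1) = 1"
    by (metis square_add_one_eq_mult[OF assms(1,2)] power_mult power_one mult.commute)
  from x show "x ^ r = x ^ (q + 1) \<or> x ^ r * x ^ (q + 1) = 1"
  proof
    assume "x ^ (q - r + 1) = 1"
    moreover have "q + 1 = (q - r + 1) + r" using assms(2) by simp
    ultimately show ?thesis by (metis power_add mult_1)
  next
    assume "x ^ (q + r + 1) = 1"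
    then show ?thesis by (simp add: power_add mult_ac)
  qed
qed

theorem lemma4p2:
  fixes m :: nat and x :: "'a::{field,finite}"
  defines "q \<equiv> (2::nat) ^ m"
  defines "r \<equiv> (2::nat) ^ ((m + 1) div 2)"
  defines "s \<equiv> q - r + 1"
  defines "t \<equiv> q + r + 1"
  assumes "odd m" and "m \<ge> 3"
  assumes "card (UNIV :: 'a set) = q ^ 4"
  assumes "x \<in> roots_of_unity s \<union> roots_of_unity t" and "x \<noteq> 1"
  defines "lam \<equiv> (x ^ (q - 1) + inverse (x ^ (q - 1))) ^ (q - 1)"
  shows "x ^ (q + 1) + fsqrt ((lam ^ r + 1) * lam) * x + lam ^ (2 ^ ((m - 1) div 2)) = 0"
proof -
  have char: "CHAR('a) = 2"
    using assms(7) by (intro CHAR_eq_2_if_card_eq_power_2) (simp add: q_def flip: power_mult)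
  have rr: "r * r = 2 * q"
    unfolding r_def q_def by (rule two_power_half_square[OF assms(5)])
  have "r \<le> q" unfolding r_def q_def by (rule power_increasing) (use assms(6) in auto)
  note x = roots_of_unity_conjugate_unionD[OF rr this assms(8)[unfolded s_def t_def]]
  define \<mu> where "\<mu> = (1 + x * x ^ q) / (x + x ^ q)"
  have lam: "lam = \<mu> ^ 2"
    unfolding lam_def \<mu>_def
    by (rule power_pred_add_inverse_eq_square_CHAR_2[OF char q_def[THEN meta_eq_to_obj_eq] x(1) assms(9)])
  have "((\<mu> ^ r + 1) * \<mu>) ^ 2 = (lam ^ r + 1) * lam"
    using add_power_two_power_CHAR_2[OF char, of "\<mu> ^ r" 1 1]
    by (simp add: lam power_mult_distrib flip: power_mult) (simp add: mult.commute)
  then have "fsqrt ((lam ^ r + 1) * lam) = (\<mu> ^ r + 1) * \<mu>"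
    using fsqrt_square_CHAR_2[OF char] by metis
  moreover have "(m + 1) div 2 = Suc ((m - 1) div 2)"
    using assms(5,6) by presburger
  then have "lam ^ (2 ^ ((m - 1) div 2)) = \<mu> ^ r"
    unfolding lam r_def by (simp add: power_mult)
  moreover have "\<mu> ^ r = x * ((x ^ q) ^ 2 + 1) / (x ^ q * (x ^ 2 + 1))"
    unfolding \<mu>_def
    by (rule frac_power_two_power_eq_CHAR_2[OF char r_def[THEN meta_eq_to_obj_eq] x(1) assms(9) x(2)])
  moreover have "x ^ q \<noteq> 0" using x(1) by (auto simp: power_0_left)
  ultimately show ?thesis
    using quadratic_relation_CHAR_2[OF char assms(9) _ add_power_ne_zero_CHAR_2[OF char x(1) assms(9)]]
    by (simp add: \<mu>_def)
qed

end
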